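(* Let $R$ be an integral domain and let $Q$ be a u.p.-quandle. Then the quandle ring $R[Q]$ has no zero-divisors.
   Context: A quandle is a non-empty set $Q$ with a binary operation $(x,y)\mapsto xy$ such that $xx=x$ for all $x$; for all $x,y$ there is a unique $z$ with $x=zy$; and $(xy)z=(xz)(yz)$ for all $x,y,z$. The quandle ring $R[Q]$ is the free $R$-module with basis $Q$, with multiplication $\big(\sum_i\alpha_i x_i\big)\big(\sum_j\beta_j x_j\big)=\sum_{i,j}\alpha_i\beta_j (x_ix_j)$. A zero-divisor is a non-zero element $u$ for which there exists a non-zero $v$ with $uv=0$ or $vu=0$. A quandle $Q$ is a u.p.-quandle (unique product quandle) if for any two non-empty finite subsets $A,B\subseteq Q$ there is at least one element $x\in Q$ that has exactly one representation of the form $x=ab$ with $a\in A$, $b\in B$. *)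

theory Defs
  imports Main
begin

definition quandle :: "('q \<Rightarrow> 'q \<Rightarrow> 'q) \<Rightarrow> bool" where
  "quandle op \<longleftrightarrow>
     (\<forall>x. op x x = x) \<and>
     (\<forall>x y. \<exists>!z. x = op z y) \<and>
     (\<forall>x y z. op (op x y) z = op (op x z) (op y z))"

definition up_quandle :: "('q \<Rightarrow> 'q \<Rightarrow> 'q) \<Rightarrow> bool" where
  "up_quandle op \<longleftrightarrow> quandle op \<and>
     (\<forall>A B. finite A \<and> A \<noteq> {} \<and> finite B \<and> B \<noteq> {} \<longrightarrow>
        (\<exists>x. card {(a, b). a \<in> A \<and> b \<in> B \<and> op a b = x} = 1))"

text \<open>Elements of the quandle ring R[Q]: finitely supported coefficient functions.\<close>
definition supp :: "('q \<Rightarrow> 'r::zero) \<Rightarrow> 'q set" where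
  "supp u = {x. u x \<noteq> 0}"

definition qring_elem :: "('q \<Rightarrow> 'r::zero) \<Rightarrow> bool" where
  "qring_elem u \<longleftrightarrow> finite (supp u)"

definition qring_mult :: "('q \<Rightarrow> 'q \<Rightarrow> 'q) \<Rightarrow> ('q \<Rightarrow> 'r::comm_ring_1) \<Rightarrow> ('q \<Rightarrow> 'r) \<Rightarrow> ('q \<Rightarrow> 'r)" where
  "qring_mult op u v = (\<lambda>z. \<Sum>x\<in>supp u. \<Sum>y\<in>supp v. if op x y = z then u x * v y else 0)"

definition qring_zero_divisor :: "('q \<Rightarrow> 'q \<Rightarrow> 'q) \<Rightarrow> ('q \<Rightarrow> 'r::comm_ring_1) \<Rightarrow> bool" where
  "qring_zero_divisor op u \<longleftrightarrow> qring_elem u \<and> u \<noteq> (\<lambda>_. 0) \<and>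
     (\<exists>v. qring_elem v \<and> v \<noteq> (\<lambda>_. 0) \<and> (qring_mult op u v = (\<lambda>_. 0) \<or> qring_mult op v u = (\<lambda>_. 0)))"

end

theory Submission
  imports Defs
begin

text \<open>If some element z has exactly one representation z = a b with a in the support of u and
  b in the support of v, the coefficient of z in u v is the single product u a * v b, which is
  nonzero over a domain. The u.p. property supplies such a z for the two supports.\<close>

definition unique_product :: "('q \<Rightarrow> 'q \<Rightarrow> 'q) \<Rightarrow> bool" where
  "unique_product op \<longleftrightarrow>
     (\<forall>A B. finite A \<and> A \<noteq> {} \<and> finite B \<and> B \<noteq> {} \<longrightarrow>
        (\<exists>z. card {(a, b). a \<in> A \<and> b \<in> B \<and> op a b = z} = 1))"

lemma up_quandle_imp_unique_product: "up_quandle op \<Longrightarrow> unique_product op"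
  unfolding up_quandle_def unique_product_def by blast

lemma qring_mult_eq_sum_fibre:
  fixes u v :: "'q \<Rightarrow> 'r::comm_ring_1"
  assumes "qring_elem u" and "qring_elem v"
  shows "qring_mult op u v z =
    (\<Sum>(a, b)\<in>{(a, b). a \<in> supp u \<and> b \<in> supp v \<and> op a b = z}. u a * v b)"
proof -
  have "qring_mult op u v z =
      (\<Sum>(a, b)\<in>supp u \<times> supp v. if op a b = z then u a * v b else 0)"
    unfolding qring_mult_def by (simp add: sum.cartesian_product)
  also have "\<dots> = (\<Sum>(a, b)\<in>{p \<in> supp u \<times> supp v. op (fst p) (snd p) = z}. u a * v b)"
    using assms by (simp add: qring_elem_def sum.inter_filter case_prod_beta)
  also have "{p \<in> supp u \<times> supp v. op (fst p) (snd p) = z} =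
      {(a, b). a \<in> supp u \<and> b \<in> supp v \<and> op a b = z}"
    by auto
  finally show ?thesis .
qed

lemma qring_mult_nonzero:
  fixes u v :: "'q \<Rightarrow> 'r::idom"
  assumes "unique_product op"
    and "qring_elem u" "u \<noteq> (\<lambda>_. 0)" and "qring_elem v" "v \<noteq> (\<lambda>_. 0)"
  shows "qring_mult op u v \<noteq> (\<lambda>_. 0)"
proof -
  have "finite (supp u)" "finite (supp v)" "supp u \<noteq> {}" "supp v \<noteq> {}"
    using assms by (auto simp: qring_elem_def supp_def)
  then obtain z where "card {(a, b). a \<in> supp u \<and> b \<in> supp v \<and> op a b = z} = 1"
    using assms(1) unfolding unique_product_def by blast
  then obtain p where "{(a, b). a \<in> supp u \<and> b \<in> supp v \<and> op a b = z} = {p}"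
    by (rule card_1_singletonE)
  then obtain a b where fibre: "{(a, b). a \<in> supp u \<and> b \<in> supp v \<and> op a b = z} = {(a, b)}"
    by (cases p) simp
  then have "u a \<noteq> 0" "v b \<noteq> 0"
    by (auto simp: supp_def)
  moreover have "qring_mult op u v z = u a * v b"
    using qring_mult_eq_sum_fibre[OF assms(2,4)] fibre by simp
  ultimately have "qring_mult op u v z \<noteq> 0"
    by simp
  then show ?thesis
    by auto
qed

theorem proposition3p3:
  fixes op :: "'q \<Rightarrow> 'q \<Rightarrow> 'q"
  assumes "up_quandle op"
  shows "\<not> (\<exists>u :: 'q \<Rightarrow> 'r::idom. qring_zero_divisor op u)"
  using qring_mult_nonzero[OF up_quandle_imp_unique_product[OF assms]]
  unfolding qring_zero_divisor_def by blast

end
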